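(* Let $G=(X,\Sigma,\longrightarrow,X_0)$ be a plant, $R_i=(Z_i,\Sigma,\longrightarrow,Z_{0i})$ ($i=1,2$) specifications with $R_1\sqsubseteq R_2$, and $S=(Y,\Sigma,\longrightarrow,Y_0)$ a $\Sigma_{uc}$-compatible supervisor with $R_1\sqsubseteq S\|G\sqsubseteq R_2$. Let $\Sigma'=\{\sigma\in\Sigma:z_1\xrightarrow{\sigma}\text{ in }R_1\text{ for some }z_1\in Z_1\}$. If there exist simulations $\Phi$ from $R_1$ to $R_2$ and $\Phi_1$ from $R_1$ to $S\|G$ such that $\Phi^{-1}$ is a simulation from $R_2$ to $R_1$ w.r.t. $\Sigma'$ and $\Phi_1^{-1}\circ\Phi$ is a simulation from $S\|G$ to $R_2$, then $S$ is $\Sigma_{uc}$-admissible w.r.t. $G$ and $S\|G\sqsubseteq_{cc}R_2$ with $\Sigma_r=\Sigma'$ (that is, $S\in\mathit{SPR}(G,R_2)$ for $\Sigma_r=\Sigma'$).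
   Context: An automaton is a 4-tuple $A=(Q,\Sigma,\longrightarrow,Q_0)$ with state set $Q$, finite event set $\Sigma$, ${\longrightarrow}\subseteq Q\times\Sigma\times Q$ and $\emptyset\neq Q_0\subseteq Q$. Write $q\xrightarrow{\sigma}q'$ for $(q,\sigma,q')\in{\longrightarrow}$, $q\xrightarrow{\sigma}$ if some such $q'$ exists; extend to strings. A state is reachable if reached from an initial state by some string. Events are partitioned into uncontrollable $\Sigma_{uc}$ and controllable $\Sigma_c$; $\Sigma_r\subseteq\Sigma$ denotes the set of required events. $S\|G=(Y\times X,\Sigma,\longrightarrow,Y_0\times X_0)$ with $(y,x)\xrightarrow{\sigma}(y',x')$ iff $y\xrightarrow{\sigma}y'$ and $x\xrightarrow{\sigma}x'$. $S$ is $\Sigma_{uc}$-compatible if $y\xrightarrow{\sigma}$ for every $y\in Y$ and $\sigma\in\Sigma_{uc}$; $S$ is $\Sigma_{uc}$-admissible w.r.t. $G$ if for every reachable $(y,x)$ of $S\|G$ and $\sigma\in\Sigma_{uc}$, $x\xrightarrow{\sigma}$ implies $(y,x)\xrightarrow{\sigma}$. For automata $A_1,A_2$ (state sets $Q_1,Q_2$, initial sets $Q_{01},Q_{02}$) and $\Sigma''\subseteq\Sigma$, $\Phi\subseteq Q_1\times Q_2$ is a simulation w.r.t. $\Sigma''$ if (initial state) every $q_0\in Q_{01}$ has $p_0\in Q_{02}$ with $(q_0,p_0)\in\Phi$ and (forward) for $(q,p)\in\Phi$, $\sigma\in\Sigma''$, $q\xrightarrow{\sigma}q'$ there is $p'$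 with $p\xrightarrow{\sigma}p'$, $(q',p')\in\Phi$; a simulation is a simulation w.r.t. $\Sigma$; a cc-simulation is a simulation that also satisfies ($\Sigma_r$-backward): for $(q,p)\in\Phi$, $\sigma\in\Sigma_r$, $p\xrightarrow{\sigma}p'$ there is $q'$ with $q\xrightarrow{\sigma}q'$, $(q',p')\in\Phi$. $A_1\sqsubseteq A_2$, $A_1\sqsubseteq_{cc}A_2$ mean such relations exist. $\Phi^{-1}=\{(p,q):(q,p)\in\Phi\}$ and $\Phi\circ\Psi=\{(a,c):\exists b\,((a,b)\in\Phi\wedge(b,c)\in\Psi)\}$. $\mathit{SPR}(G,R)$ is the set of $\Sigma_{uc}$-admissible supervisors $S$ with $S\|G\sqsubseteq_{cc}R$. *)

theory Defs
  imports Main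
begin

text \<open>An automaton (Q, Sigma, transitions, Q0). The event set Sigma is a common
finite set of events, passed as a parameter.\<close>
record ('q, 'e) automaton =
  states :: "'q set"
  trans  :: "('q \<times> 'e \<times> 'q) set"
  init   :: "'q set"

definition wf_aut :: "'e set \<Rightarrow> ('q, 'e) automaton \<Rightarrow> bool" where
  "wf_aut Sig A \<longleftrightarrow> trans A \<subseteq> states A \<times> Sig \<times> states A \<and>
                     init A \<noteq> {} \<and> init A \<subseteq> states A"

definition can_do :: "('q, 'e) automaton \<Rightarrow> 'q \<Rightarrow> 'e \<Rightarrow> bool" where
  "can_do A q \<sigma> \<longleftrightarrow> (\<exists>q'. (q, \<sigma>, q') \<in> trans A)"

inductive reachable :: "('q, 'e) automaton \<Rightarrow> 'q \<Rightarrow> bool" for A where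
  reach_init: "q \<in> init A \<Longrightarrow> reachable A q"
| reach_step: "reachable A q \<Longrightarrow> (q, \<sigma>, q') \<in> trans A \<Longrightarrow> reachable A q'"

definition sync :: "('y, 'e) automaton \<Rightarrow> ('x, 'e) automaton \<Rightarrow> ('y \<times> 'x, 'e) automaton" where
  "sync S G = \<lparr> states = states S \<times> states G,
      trans = {((y, x), \<sigma>, (y', x')) | y x \<sigma> y' x'.
                 (y, \<sigma>, y') \<in> trans S \<and> (x, \<sigma>, x') \<in> trans G},
      init = init S \<times> init G \<rparr>"

definition uc_compatible :: "'e set \<Rightarrow> ('y, 'e) automaton \<Rightarrow> bool" where
  "uc_compatible Suc_ev S \<longleftrightarrow> (\<forall>y \<in> states S. \<forall>\<sigma> \<in> Suc_ev. can_do S y \<sigma>)"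

definition uc_admissible :: "'e set \<Rightarrow> ('y, 'e) automaton \<Rightarrow> ('x, 'e) automaton \<Rightarrow> bool" where
  "uc_admissible Suc_ev S G \<longleftrightarrow>
     (\<forall>y x. reachable (sync S G) (y, x) \<longrightarrow>
        (\<forall>\<sigma> \<in> Suc_ev. can_do G x \<sigma> \<longrightarrow> can_do (sync S G) (y, x) \<sigma>))"

definition is_sim_wrt :: "('p, 'e) automaton \<Rightarrow> ('q, 'e) automaton \<Rightarrow> 'e set \<Rightarrow> ('p \<times> 'q) set \<Rightarrow> bool" where
  "is_sim_wrt A1 A2 E Phi \<longleftrightarrow>
     Phi \<subseteq> states A1 \<times> states A2 \<and>
     (\<forall>q0 \<in> init A1. \<exists>p0 \<in> init A2. (q0, p0) \<in> Phi) \<and>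
     (\<forall>q p \<sigma> q'. (q, p) \<in> Phi \<longrightarrow> \<sigma> \<in> E \<longrightarrow> (q, \<sigma>, q') \<in> trans A1 \<longrightarrow>
        (\<exists>p'. (p, \<sigma>, p') \<in> trans A2 \<and> (q', p') \<in> Phi))"

definition is_sim :: "'e set \<Rightarrow> ('p, 'e) automaton \<Rightarrow> ('q, 'e) automaton \<Rightarrow> ('p \<times> 'q) set \<Rightarrow> bool" where
  "is_sim Sig A1 A2 Phi \<longleftrightarrow> is_sim_wrt A1 A2 Sig Phi"

definition is_cc_sim :: "'e set \<Rightarrow> 'e set \<Rightarrow> ('p, 'e) automaton \<Rightarrow> ('q, 'e) automaton \<Rightarrow> ('p \<times> 'q) set \<Rightarrow> bool" where
  "is_cc_sim Sig Sr A1 A2 Phi \<longleftrightarrow> is_sim Sig A1 A2 Phi \<and>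
     (\<forall>q p \<sigma> p'. (q, p) \<in> Phi \<longrightarrow> \<sigma> \<in> Sr \<longrightarrow> (p, \<sigma>, p') \<in> trans A2 \<longrightarrow>
        (\<exists>q'. (q, \<sigma>, q') \<in> trans A1 \<and> (q', p') \<in> Phi))"

definition simulated :: "'e set \<Rightarrow> ('p, 'e) automaton \<Rightarrow> ('q, 'e) automaton \<Rightarrow> bool" where
  "simulated Sig A1 A2 \<longleftrightarrow> (\<exists>Phi. is_sim Sig A1 A2 Phi)"

definition cc_simulated :: "'e set \<Rightarrow> 'e set \<Rightarrow> ('p, 'e) automaton \<Rightarrow> ('q, 'e) automaton \<Rightarrow> bool" where
  "cc_simulated Sig Sr A1 A2 \<longleftrightarrow> (\<exists>Phi. is_cc_sim Sig Sr A1 A2 Phi)"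

definition SPR :: "'e set \<Rightarrow> 'e set \<Rightarrow> 'e set \<Rightarrow> ('x, 'e) automaton \<Rightarrow> ('z, 'e) automaton \<Rightarrow> ('y, 'e) automaton set" where
  "SPR Sig Suc_ev Sr G R = {S. wf_aut Sig S \<and> uc_admissible Suc_ev S G \<and> cc_simulated Sig Sr (sync S G) R}"

end

theory Submission
  imports Defs
begin

(* Admissibility is immediate: a reachable state of S || G has its S-component in
   states S, where S never blocks an uncontrollable event. For the required events
   Sigma' the relation Phi1^-1 O Phi is a cc-simulation: a required R2-step from p,
   where (z1, q) : Phi1 and (z1, p) : Phi, is matched in R1 via Phi^-1, and that
   R1-step is in turn matched in S || G via Phi1. *)

lemma reachable_in_states:
  assumes "wf_aut Sig A" and "reachable A q"
  shows "q \<in> states A"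
  using assms(2) by induction (use assms(1) in \<open>auto simp: wf_aut_def\<close>)

lemma wf_aut_sync:
  assumes "wf_aut Sig S" and "wf_aut Sig G"
  shows "wf_aut Sig (sync S G)"
  using assms by (auto simp: wf_aut_def sync_def)

lemma can_do_sync_iff:
  "can_do (sync S G) (y, x) \<sigma> \<longleftrightarrow> can_do S y \<sigma> \<and> can_do G x \<sigma>"
  by (auto simp: can_do_def sync_def)

lemma uc_compatible_imp_uc_admissible:
  assumes "wf_aut Sig S" and "wf_aut Sig G" and "uc_compatible Suc_ev S"
  shows "uc_admissible Suc_ev S G"
  unfolding uc_admissible_def
proof (intro allI impI ballI)
  fix y x \<sigma>
  assume "reachable (sync S G) (y, x)" and "\<sigma> \<in> Suc_ev" and "can_do G x \<sigma>"
  have "(y, x) \<in> states (sync S G)"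
    using wf_aut_sync[OF assms(1,2)] \<open>reachable (sync S G) (y, x)\<close>
    by (rule reachable_in_states)
  then have "y \<in> states S" by (simp add: sync_def)
  with assms(3) \<open>\<sigma> \<in> Suc_ev\<close> have "can_do S y \<sigma>"
    unfolding uc_compatible_def by blast
  with \<open>can_do G x \<sigma>\<close> show "can_do (sync S G) (y, x) \<sigma>"
    by (simp add: can_do_sync_iff)
qed

lemma is_sim_wrt_subset:
  assumes "is_sim_wrt A B E Phi" and "E' \<subseteq> E"
  shows "is_sim_wrt A B E' Phi"
  using assms unfolding is_sim_wrt_def by blast

lemma is_cc_sim_converse_relcomp:
  assumes sim: "is_sim Sig A B (converse Phi1 O Phi)"
    and inv_sim: "is_sim_wrt B R Sr (converse Phi)"
    and sim1: "is_sim_wrt R A Sr Phi1"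
  shows "is_cc_sim Sig Sr A B (converse Phi1 O Phi)"
  unfolding is_cc_sim_def
proof (intro conjI allI impI)
  show "is_sim Sig A B (converse Phi1 O Phi)" by (rule sim)
next
  fix q p \<sigma> p'
  assume "(q, p) \<in> converse Phi1 O Phi" and "\<sigma> \<in> Sr" and "(p, \<sigma>, p') \<in> trans B"
  then obtain z where "(z, q) \<in> Phi1" and "(z, p) \<in> Phi" by blast
  with inv_sim \<open>\<sigma> \<in> Sr\<close> \<open>(p, \<sigma>, p') \<in> trans B\<close> obtain z' where
    "(z, \<sigma>, z') \<in> trans R" and "(z', p') \<in> Phi"
    unfolding is_sim_wrt_def by blast
  with sim1 \<open>(z, q) \<in> Phi1\<close> \<open>\<sigma> \<in> Sr\<close> obtain q' where
    "(q, \<sigma>, q') \<in> trans A" and "(z', q') \<in> Phi1"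
    unfolding is_sim_wrt_def by blast
  with \<open>(z', p') \<in> Phi\<close> show "\<exists>q'. (q, \<sigma>, q') \<in> trans A \<and> (q', p') \<in> converse Phi1 O Phi"
    by blast
qed

theorem proposition2:
  fixes Sig Suc_ev :: "'e set"
    and G :: "('x, 'e) automaton" and S :: "('y, 'e) automaton"
    and R1 :: "('z1, 'e) automaton" and R2 :: "('z2, 'e) automaton"
    and Phi :: "('z1 \<times> 'z2) set" and Phi1 :: "('z1 \<times> ('y \<times> 'x)) set"
  assumes "finite Sig" and "Suc_ev \<subseteq> Sig"
    and "wf_aut Sig G" and "wf_aut Sig R1" and "wf_aut Sig R2" and "wf_aut Sig S"
    and "simulated Sig R1 R2"
    and "uc_compatible Suc_ev S"
    and "simulated Sig R1 (sync S G)" and "simulated Sig (sync S G) R2"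
    and "is_sim Sig R1 R2 Phi"
    and "is_sim Sig R1 (sync S G) Phi1"
    and "is_sim_wrt R2 R1 {\<sigma> \<in> Sig. \<exists>z1 \<in> states R1. can_do R1 z1 \<sigma>} (converse Phi)"
    and "is_sim Sig (sync S G) R2 (converse Phi1 O Phi)"
  shows "uc_admissible Suc_ev S G \<and>
         cc_simulated Sig {\<sigma> \<in> Sig. \<exists>z1 \<in> states R1. can_do R1 z1 \<sigma>} (sync S G) R2 \<and>
         S \<in> SPR Sig Suc_ev {\<sigma> \<in> Sig. \<exists>z1 \<in> states R1. can_do R1 z1 \<sigma>} G R2"
proof -
  let ?Sr = "{\<sigma> \<in> Sig. \<exists>z1 \<in> states R1. can_do R1 z1 \<sigma>}"
  have adm: "uc_admissible Suc_ev S G"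
    using assms(6,3,8) by (rule uc_compatible_imp_uc_admissible)
  have "is_sim_wrt R1 (sync S G) ?Sr Phi1"
    using assms(12) unfolding is_sim_def by (rule is_sim_wrt_subset) blast
  with assms(14,13) have "is_cc_sim Sig ?Sr (sync S G) R2 (converse Phi1 O Phi)"
    by (rule is_cc_sim_converse_relcomp)
  then have "cc_simulated Sig ?Sr (sync S G) R2"
    unfolding cc_simulated_def by blast
  with adm assms(6) show ?thesis
    unfolding SPR_def by blast
qed

end
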